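(* Let $H$ be a finite graph (possibly with loops), and let $c\geq 1$ and $t\geq 0$ be integers. If the exponential graph $\mathcal{E}_c(H)$ admits a proper coloring with $c+t$ colors, then $\mathcal{E}_c(H)$ has a suited $(c+t)$-coloring.
   Context: All graphs have no multiple edges but may have loops. For a finite graph $H$ and integer $c\ge 1$, two maps $\phi_1,\phi_2: V(H)\to[c]$ are co-proper if $\phi_1(u)\neq\phi_2(v)$ whenever $u\sim v$ in $H$ (for a loop at $u$ this includes the pair $u=v$). The exponential graph $\mathcal{E}_c(H)$ has vertex set $[c]^{V(H)}$, two maps $\phi_1,\phi_2$ being adjacent iff they are co-proper (a map co-proper with itself has a loop). A proper $(c+t)$-coloring $\Psi: V(\mathcal{E}_c(H))\to[c+t]$ assigns distinct colors to adjacent maps (so no proper coloring exists if there is a loop). The colors $1,\dots,c$ are called primary and $c+1,\dots,c+t$ secondary. A proper $(c+t)$-coloring $\Psi$ of $\mathcal{E}_c(H)$ is suited if for every $\phi\in V(\mathcal{E}_c(H))$, $\Psi(\phi)\in \operatorname{im}(\phi)\cup\{c+1,\dots,c+t\}$. *)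

theory Defs
  imports Main "HOL-Library.FuncSet"
begin

text \<open>A finite graph H (loops allowed, no multiple edges) is given by a finite vertex
set V and a symmetric adjacency relation E on V; E u u means a loop at u.\<close>

definition graph :: "'v set \<Rightarrow> ('v \<Rightarrow> 'v \<Rightarrow> bool) \<Rightarrow> bool" where
  "graph V E \<longleftrightarrow> finite V \<and> (\<forall>u v. E u v \<longrightarrow> u \<in> V \<and> v \<in> V) \<and> (\<forall>u v. E u v \<longrightarrow> E v u)"

definition exp_vertices :: "'v set \<Rightarrow> nat \<Rightarrow> ('v \<Rightarrow> nat) set" where
  "exp_vertices V c = V \<rightarrow>\<^sub>E {1..c}"

definition co_proper :: "'v set \<Rightarrow> ('v \<Rightarrow> 'v \<Rightarrow> bool) \<Rightarrow> ('v \<Rightarrow> nat) \<Rightarrow> ('v \<Rightarrow> nat) \<Rightarrow> bool" where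
  "co_proper V E \<phi>1 \<phi>2 \<longleftrightarrow> (\<forall>u\<in>V. \<forall>v\<in>V. E u v \<longrightarrow> \<phi>1 u \<noteq> \<phi>2 v)"

text \<open>Adjacency in E_c(H) (a map co-proper with itself has a loop).\<close>
definition exp_adj :: "'v set \<Rightarrow> ('v \<Rightarrow> 'v \<Rightarrow> bool) \<Rightarrow> nat \<Rightarrow> ('v \<Rightarrow> nat) \<Rightarrow> ('v \<Rightarrow> nat) \<Rightarrow> bool" where
  "exp_adj V E c \<phi>1 \<phi>2 \<longleftrightarrow> \<phi>1 \<in> exp_vertices V c \<and> \<phi>2 \<in> exp_vertices V c \<and> co_proper V E \<phi>1 \<phi>2"

definition proper_exp_coloring ::
  "'v set \<Rightarrow> ('v \<Rightarrow> 'v \<Rightarrow> bool) \<Rightarrow> nat \<Rightarrow> nat \<Rightarrow> (('v \<Rightarrow> nat) \<Rightarrow> nat) \<Rightarrow> bool" where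
  "proper_exp_coloring V E c k \<Psi> \<longleftrightarrow>
     (\<forall>\<phi>\<in>exp_vertices V c. \<Psi> \<phi> \<in> {1..k}) \<and>
     (\<forall>\<phi>1 \<phi>2. exp_adj V E c \<phi>1 \<phi>2 \<longrightarrow> \<Psi> \<phi>1 \<noteq> \<Psi> \<phi>2)"

definition suited_coloring ::
  "'v set \<Rightarrow> ('v \<Rightarrow> 'v \<Rightarrow> bool) \<Rightarrow> nat \<Rightarrow> nat \<Rightarrow> (('v \<Rightarrow> nat) \<Rightarrow> nat) \<Rightarrow> bool" where
  "suited_coloring V E c t \<Psi> \<longleftrightarrow>
     proper_exp_coloring V E c (c + t) \<Psi> \<and>
     (\<forall>\<phi>\<in>exp_vertices V c. \<Psi> \<phi> \<in> \<phi> ` V \<union> {c+1..c+t})"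

end

theory Submission
  imports Defs
begin

text \<open>The constant map with value i is co-proper with every map that misses the value i; in
particular the c constant maps are pairwise co-proper. So a proper colouring gives the constant
maps distinct colours, and a map sharing the colour of the constant map i must take the value i.
Permuting the colours so that the constant map i receives colour i, and all remaining colours
become secondary, therefore yields a suited colouring.\<close>

lemma bij_betw_extending_inverse:
  assumes inj: "inj_on f I" and sub: "f ` I \<subseteq> B" and "finite B" "finite J"
    and disj: "I \<inter> J = {}" and card: "card B = card I + card J"
  obtains \<pi> where "bij_betw \<pi> B (I \<union> J)" and "\<And>i. i \<in> I \<Longrightarrow> \<pi> (f i) = i"
proof -
  have "finite I" using inj sub \<open>finite B\<close> finite_imageD finite_subset by blast
  then have "card (B - f ` I) = card J"
    using card sub inj by (simp add: card_Diff_subset card_image finite_subset)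
  then obtain h where h: "bij_betw h (B - f ` I) J"
    using finite_same_card_bij \<open>finite B\<close> \<open>finite J\<close> by blast
  define \<pi> where "\<pi> x = (if x \<in> f ` I then the_inv_into I f x else h x)" for x
  have "bij_betw \<pi> (f ` I) I"
    using bij_betw_the_inv_into[OF inj_on_imp_bij_betw[OF inj]]
    by (rule bij_betw_cong[THEN iffD1, rotated]) (simp add: \<pi>_def)
  moreover have "bij_betw \<pi> (B - f ` I) J"
    using h by (rule bij_betw_cong[THEN iffD1, rotated]) (simp add: \<pi>_def)
  ultimately have "bij_betw \<pi> (f ` I \<union> (B - f ` I)) (I \<union> J)"
    using disj by (rule bij_betw_combine)
  moreover have "f ` I \<union> (B - f ` I) = B" using sub by blast
  moreover have "\<pi> (f i) = i" if "i \<in> I" for i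
    using that inj by (simp add: \<pi>_def the_inv_into_f_f)
  ultimately show thesis using that by simp
qed

lemma proper_exp_coloring_relabel:
  assumes "proper_exp_coloring V E c k \<Psi>"
    and "inj_on \<pi> {1..k}" and "\<pi> ` {1..k} \<subseteq> {1..k'}"
  shows "proper_exp_coloring V E c k' (\<pi> \<circ> \<Psi>)"
  using assms unfolding proper_exp_coloring_def exp_adj_def
  by (metis comp_apply image_subset_iff inj_onD)

definition const_map :: "'v set \<Rightarrow> nat \<Rightarrow> 'v \<Rightarrow> nat" where
  "const_map V i = (\<lambda>_\<in>V. i)"

lemma const_map_in_exp_vertices:
  "i \<in> {1..c} \<Longrightarrow> const_map V i \<in> exp_vertices V c"
  by (auto simp: const_map_def exp_vertices_def)

lemma exp_adj_const_map:
  assumes "\<phi> \<in> exp_vertices V c" and "i \<in> {1..c}" and "i \<notin> \<phi> ` V"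
  shows "exp_adj V E c \<phi> (const_map V i)"
  using assms const_map_in_exp_vertices[OF assms(2)]
  by (auto simp: exp_adj_def co_proper_def const_map_def)

lemma proper_exp_coloring_const_map_value:
  assumes "proper_exp_coloring V E c k \<Psi>" and "\<phi> \<in> exp_vertices V c" and "i \<in> {1..c}"
    and "\<Psi> \<phi> = \<Psi> (const_map V i)"
  shows "i \<in> \<phi> ` V"
  using assms exp_adj_const_map unfolding proper_exp_coloring_def by blast

lemma proper_exp_coloring_inj_on_const_maps:
  assumes "proper_exp_coloring V E c k \<Psi>"
  shows "inj_on (\<lambda>i. \<Psi> (const_map V i)) {1..c}"
proof (rule inj_onI)
  fix i j assume "i \<in> {1..c}" "j \<in> {1..c}" "\<Psi> (const_map V i) = \<Psi> (const_map V j)"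
  then have "j \<in> const_map V i ` V"
    using proper_exp_coloring_const_map_value[OF assms const_map_in_exp_vertices] by blast
  then show "i = j" by (auto simp: const_map_def)
qed

theorem lemma3:
  fixes V :: "'v set" and E :: "'v \<Rightarrow> 'v \<Rightarrow> bool" and c t :: nat
  assumes "graph V E" and "c \<ge> 1"
    and "\<exists>\<Psi>. proper_exp_coloring V E c (c + t) \<Psi>"
  shows "\<exists>\<Psi>. suited_coloring V E c t \<Psi>"
proof -
  obtain \<Psi> where \<Psi>: "proper_exp_coloring V E c (c + t) \<Psi>" using assms(3) by blast
  define f where "f i = \<Psi> (const_map V i)" for i
  have f_inj: "inj_on f {1..c}"
    unfolding f_def using proper_exp_coloring_inj_on_const_maps[OF \<Psi>] .
  have f_range: "f ` {1..c} \<subseteq> {1..c+t}"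
    using \<Psi> const_map_in_exp_vertices unfolding f_def proper_exp_coloring_def by blast
  obtain \<pi> where \<pi>: "bij_betw \<pi> {1..c+t} ({1..c} \<union> {c+1..c+t})"
    and \<pi>_f: "\<And>i. i \<in> {1..c} \<Longrightarrow> \<pi> (f i) = i"
    using bij_betw_extending_inverse[OF f_inj f_range, of "{c+1..c+t}"] by auto
  have \<pi>_secondary: "\<pi> x \<in> {c+1..c+t}" if "x \<in> {1..c+t}" "x \<notin> f ` {1..c}" for x
    using that \<pi> \<pi>_f f_range unfolding bij_betw_def inj_on_def by (metis UnE image_eqI subsetD)
  have "proper_exp_coloring V E c (c + t) (\<pi> \<circ> \<Psi>)"
    using \<pi> by (intro proper_exp_coloring_relabel[OF \<Psi>]) (auto simp: bij_betw_def)
  moreover have "(\<pi> \<circ> \<Psi>) \<phi> \<in> \<phi> ` V \<union> {c+1..c+t}" if \<phi>: "\<phi> \<in> exp_vertices V c" for \<phi>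
  proof (cases "\<Psi> \<phi> \<in> f ` {1..c}")
    case True
    then obtain i where "i \<in> {1..c}" "\<Psi> \<phi> = f i" by blast
    then show ?thesis
      using proper_exp_coloring_const_map_value[OF \<Psi> \<phi>] \<pi>_f by (simp add: f_def)
  next
    case False
    then show ?thesis using \<pi>_secondary \<Psi> \<phi> unfolding proper_exp_coloring_def by simp
  qed
  ultimately show ?thesis unfolding suited_coloring_def by blast
qed

end
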